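(* Let $\hat h:\mathbb A\to\mathbb R$ be continuous with $\hat h(x,y+1)=\hat h(x,y)+1$, such that every level set $A_\xi=\hat h^{-1}\{\xi\}$, $\xi\in\mathbb R$, is an essential annular continuum, and put $A^\pm_\xi=\partial\mathcal U^\pm(A_\xi)$. If $A_\xi$ is thin, then, in the Hausdorff metric, $\lim_{\xi'\nearrow\xi}A^-_{\xi'}=\lim_{\xi'\nearrow\xi}A_{\xi'}=A^-_\xi$ and $\lim_{\xi'\searrow\xi}A^+_{\xi'}=\lim_{\xi'\searrow\xi}A_{\xi'}=A^+_\xi$.
   Context: $\mathbb A=\mathbb S^1\times\mathbb R$. An essential annular continuum $A\subset\mathbb A$ is a continuum such that $\mathbb A\setminus A$ consists of exactly two connected components, $\mathcal U^+(A)$ unbounded above and $\mathcal U^-(A)$ unbounded below. Thin means empty interior. Hausdorff distance: $d_{\mathcal H}(C,D)=\max\{\sup_{x\in C}d(x,D),\sup_{y\in D}d(y,C)\}$. *)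

theory Defs
  imports "HOL-Analysis.Analysis"
begin

text \<open>The open annulus S^1 x R, realised as the subset (unit circle in C) x R of complex x real.\<close>
definition Ann :: "(complex \<times> real) set" where
  "Ann = sphere 0 1 \<times> UNIV"

definition essential_annular_continuum :: "(complex \<times> real) set \<Rightarrow> bool" where
  "essential_annular_continuum C \<longleftrightarrow>
     C \<subseteq> Ann \<and> compact C \<and> connected C \<and> C \<noteq> {} \<and>
     (\<exists>U V. components (Ann - C) = {U, V} \<and> U \<noteq> V \<and>
            \<not> bdd_above (snd ` U) \<and> \<not> bdd_below (snd ` V))"

definition U_plus :: "(complex \<times> real) set \<Rightarrow> (complex \<times> real) set" where
  "U_plus C = \<Union>{U \<in> components (Ann - C). \<not> bdd_above (snd ` U)}"

definition U_minus :: "(complex \<times> real) set \<Rightarrow> (complex \<times> real) set" where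
  "U_minus C = \<Union>{U \<in> components (Ann - C). \<not> bdd_below (snd ` U)}"

definition bd_Ann :: "(complex \<times> real) set \<Rightarrow> (complex \<times> real) set" where
  "bd_Ann S = (top_of_set Ann) frontier_of S"

definition thin :: "(complex \<times> real) set \<Rightarrow> bool" where
  "thin C \<longleftrightarrow> (top_of_set Ann) interior_of C = {}"

definition hausdist :: "'a::metric_space set \<Rightarrow> 'a set \<Rightarrow> real" where
  "hausdist C D = max (SUP x\<in>C. infdist x D) (SUP y\<in>D. infdist y C)"

end

theory Submission
  imports Defs
begin

text \<open>Periodicity keeps \<open>h\<close> within bounded distance of the height, so \<open>h\<close> is proper and the
  complementary components of a level set \<open>A\<^sub>\<eta>\<close> are the open sets \<open>{h < \<eta>} = U\<^sup>-(A\<^sub>\<eta>)\<close> and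
  \<open>{h > \<eta>} = U\<^sup>+(A\<^sub>\<eta>)\<close>. For \<open>\<eta> \<nearrow> \<xi>\<close> the level \<open>A\<^sub>\<eta>\<close> lies in the closure of \<open>{h < \<xi>}\<close>, and
  compactness of the bands \<open>{a \<le> h \<le> b}\<close> pushes it into every neighbourhood of that closure's top
  level, the frontier \<open>F\<^sub>\<xi>\<close> of \<open>{h < \<xi>}\<close>. Conversely, by local connectedness each point of
  \<open>F\<^sub>\<xi>\<close> has small connected neighbourhoods dipping below some level \<open>< \<xi>\<close>; for \<eta> above that level
  they cross \<open>F\<^sub>\<eta>\<close>, uniformly on the compact set \<open>F\<^sub>\<xi>\<close>.\<close>

lemma hausdist_le:
  fixes C D :: "'a::metric_space set"
  assumes "C \<noteq> {}" "D \<noteq> {}" "\<forall>x\<in>C. infdist x D \<le> e" "\<forall>y\<in>D. infdist y C \<le> e"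
  shows "hausdist C D \<le> e"
  using assms unfolding hausdist_def by (auto intro!: cSUP_least)

lemma hausdist_nonneg:
  fixes C D :: "'a::metric_space set"
  assumes "c \<in> C" "bdd_above ((\<lambda>x. infdist x D) ` C)"
  shows "0 \<le> hausdist C D"
proof -
  have "infdist c D \<le> (SUP x\<in>C. infdist x D)"
    using assms by (rule cSUP_upper)
  then show ?thesis
    unfolding hausdist_def using infdist_nonneg[of c D] by linarith
qed

lemma tendsto_hausdist_zeroI:
  fixes C :: "'b \<Rightarrow> 'a::metric_space set"
  assumes "D \<noteq> {}"
    and close: "\<And>e. e > 0 \<Longrightarrow> eventually (\<lambda>\<eta>. C \<eta> \<noteq> {} \<and> (\<forall>x\<in>C \<eta>. infdist x D < e)
                                              \<and> (\<forall>y\<in>D. infdist y (C \<eta>) < e)) F"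
  shows "((\<lambda>\<eta>. hausdist (C \<eta>) D) \<longlongrightarrow> 0) F"
proof (rule tendstoI)
  fix e :: real
  assume "e > 0"
  then have "e/2 > 0" by simp
  show "eventually (\<lambda>\<eta>. dist (hausdist (C \<eta>) D) 0 < e) F"
  proof (rule eventually_mono[OF close[OF \<open>e/2 > 0\<close>]])
    fix \<eta>
    assume \<eta>: "C \<eta> \<noteq> {} \<and> (\<forall>x\<in>C \<eta>. infdist x D < e/2) \<and> (\<forall>y\<in>D. infdist y (C \<eta>) < e/2)"
    then obtain c where "c \<in> C \<eta>" by blast
    have "hausdist (C \<eta>) D \<le> e/2"
      using \<eta> \<open>D \<noteq> {}\<close> by (intro hausdist_le) (auto intro: less_imp_le)
    moreover have "0 \<le> hausdist (C \<eta>) D"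
      using \<eta> \<open>c \<in> C \<eta>\<close> by (intro hausdist_nonneg bdd_aboveI2[of _ _ "e/2"]) (auto intro: less_imp_le)
    ultimately show "dist (hausdist (C \<eta>) D) 0 < e"
      using \<open>e > 0\<close> by (simp add: dist_real_def)
  qed
qed

lemma continuous_on_compact_less_imp_bound:
  fixes f :: "'a::topological_space \<Rightarrow> real"
  assumes "compact K" "continuous_on K f" "\<And>p. p \<in> K \<Longrightarrow> f p < c"
  obtains m where "m < c" "\<And>p. p \<in> K \<Longrightarrow> f p \<le> m"
proof (cases "K = {}")
  case True
  then show ?thesis using that[of "c - 1"] by simp
next
  case False
  then obtain m where "m \<in> f ` K" "\<forall>y\<in>f ` K. y \<le> m"
    using compact_attains_sup[OF compact_continuous_image[OF assms(2,1)]] by blast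
  then show ?thesis using that assms(3) by blast
qed

lemma interior_of_sublevel:
  fixes f :: "'a::topological_space \<Rightarrow> real"
  assumes "continuous_on S f"
  shows "(top_of_set S) interior_of {p \<in> S. f p < c} = {p \<in> S. f p < c}"
proof (rule interior_of_openin)
  show "openin (top_of_set S) {p \<in> S. f p < c}"
    using continuous_openin_preimage_gen[OF assms, of "{..<c}"] by (simp add: Int_def vimage_def)
qed

lemma frontier_of_sublevel_subset_level:
  fixes f :: "'a::topological_space \<Rightarrow> real"
  assumes "continuous_on S f"
  shows "(top_of_set S) frontier_of {p \<in> S. f p < c} \<subseteq> {p \<in> S. f p = c}"
proof -
  have "closedin (top_of_set S) {p \<in> S. f p \<le> c}"
    using continuous_closedin_preimage[OF assms, of "{..c}"] by (simp add: Int_def vimage_def)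
  then have "(top_of_set S) closure_of {p \<in> S. f p < c} \<subseteq> {p \<in> S. f p \<le> c}"
    by (rule closure_of_minimal[rotated]) auto
  then show ?thesis
    unfolding frontier_of_def interior_of_sublevel[OF assms] by auto
qed

lemma levels_near_frontier_of_sublevel:
  fixes f :: "'a::metric_space \<Rightarrow> real"
  assumes cont: "continuous_on S f"
    and cpt: "\<And>a b. compact {p \<in> S. a \<le> f p \<and> f p \<le> b}"
    and "e > 0"
  shows "\<exists>d>0. \<forall>\<eta>\<in>{\<xi> - d<..<\<xi>}. \<forall>x\<in>{p \<in> S. f p = \<eta>}.
           infdist x ((top_of_set S) frontier_of {p \<in> S. f p < \<xi>}) < e"
proof -
  define F where "F = (top_of_set S) frontier_of {p \<in> S. f p < \<xi>}"
  define K where "K = {p \<in> S. \<xi> - 1 \<le> f p \<and> f p \<le> \<xi>} \<inter> closure {p \<in> S. f p < \<xi>}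
                       \<inter> {p. e \<le> infdist p F}"
  have "compact K"
    unfolding K_def using cpt
    by (intro compact_Int_closed closed_Int closed_Collect_le) (auto intro!: continuous_intros)
  moreover have "continuous_on K f"
    using cont by (rule continuous_on_subset) (auto simp: K_def)
  moreover have "f p < \<xi>" if "p \<in> K" for p
  proof (rule ccontr)
    assume "\<not> f p < \<xi>"
    then have "p \<in> S" "f p = \<xi>" "p \<in> closure {p \<in> S. f p < \<xi>}"
      using that by (auto simp: K_def)
    then have "p \<in> F"
      unfolding F_def frontier_of_def closure_of_subtopology interior_of_sublevel[OF cont]
      by (auto simp: Int_absorb1)
    then show False using that \<open>e > 0\<close> by (simp add: K_def)
  qed
  ultimately obtain m where "m < \<xi>" and m: "\<And>p. p \<in> K \<Longrightarrow> f p \<le> m"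
    by (rule continuous_on_compact_less_imp_bound) blast+
  show ?thesis
  proof (intro exI[of _ "min 1 (\<xi> - m)"] conjI ballI)
    fix \<eta> x
    assume \<eta>: "\<eta> \<in> {\<xi> - min 1 (\<xi> - m)<..<\<xi>}" and x: "x \<in> {p \<in> S. f p = \<eta>}"
    then have "x \<in> closure {p \<in> S. f p < \<xi>}" using closure_subset by fastforce
    moreover have "x \<notin> K" using m x \<eta> by force
    ultimately show "infdist x ((top_of_set S) frontier_of {p \<in> S. f p < \<xi>}) < e"
      using x \<eta> unfolding K_def F_def by auto
  qed (use \<open>m < \<xi>\<close> in auto)
qed

lemma compact_frontier_of_sublevel:
  fixes f :: "'a::metric_space \<Rightarrow> real"
  assumes cont: "continuous_on S f" and "compact {p \<in> S. f p = c}"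
  shows "compact ((top_of_set S) frontier_of {p \<in> S. f p < c})"
proof -
  obtain T where "closed T" "(top_of_set S) frontier_of {p \<in> S. f p < c} = S \<inter> T"
    using closedin_frontier_of closedin_closed by metis
  moreover have "(top_of_set S) frontier_of {p \<in> S. f p < c} \<subseteq> {p \<in> S. f p = c}"
    using frontier_of_sublevel_subset_level[OF cont] .
  ultimately have "(top_of_set S) frontier_of {p \<in> S. f p < c} = {p \<in> S. f p = c} \<inter> T"
    by blast
  with assms(2) \<open>closed T\<close> show ?thesis by (simp add: compact_Int_closed)
qed

lemma locally_connected_closure_of_nbhd:
  fixes y :: "'a::metric_space"
  assumes lc: "locally connected S" and y: "y \<in> (top_of_set S) closure_of T" and "r > 0"
  obtains N w where "open N" "connected (S \<inter> N)" "y \<in> N" "S \<inter> N \<subseteq> ball y r" "w \<in> S \<inter> N \<inter> T"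
proof -
  have "openin (top_of_set S) (S \<inter> ball y r)" "y \<in> S \<inter> ball y r"
    using y \<open>r > 0\<close> closure_of_subset_topspace by fastforce+
  then obtain U where U: "openin (top_of_set S) U" "connected U" "y \<in> U" "U \<subseteq> S \<inter> ball y r"
    using lc unfolding locally_connected by meson
  then obtain N where "open N" "U = S \<inter> N"
    by (auto simp: openin_open)
  moreover obtain w where "w \<in> T" "w \<in> U"
    using y U unfolding in_closure_of by blast
  ultimately show ?thesis
    using that U by blast
qed

lemma frontier_of_sublevel_near_lower_frontiers:
  fixes f :: "'a::metric_space \<Rightarrow> real"
  assumes cont: "continuous_on S f" and lc: "locally connected S"
    and cpt: "compact {p \<in> S. f p = \<xi>}"
    and "e > 0"
  shows "\<exists>d>0. \<forall>\<eta>\<in>{\<xi> - d<..<\<xi>}. \<forall>y\<in>(top_of_set S) frontier_of {p \<in> S. f p < \<xi>}.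
           \<exists>q\<in>(top_of_set S) frontier_of {p \<in> S. f p < \<eta>}. dist y q < e"
proof -
  define F where "F = (top_of_set S) frontier_of {p \<in> S. f p < \<xi>}"
  have FS: "F \<subseteq> {p \<in> S. f p = \<xi>}"
    unfolding F_def by (rule frontier_of_sublevel_subset_level[OF cont])
  have "\<exists>N w. open N \<and> connected (S \<inter> N) \<and> y \<in> N \<and> S \<inter> N \<subseteq> ball y (e/2)
              \<and> w \<in> S \<inter> N \<and> f w < \<xi>" if "y \<in> F" for y
  proof -
    have "y \<in> (top_of_set S) closure_of {p \<in> S. f p < \<xi>}"
      using \<open>y \<in> F\<close> unfolding F_def frontier_of_def by auto
    then show ?thesis
      using locally_connected_closure_of_nbhd[OF lc _ half_gt_zero[OF \<open>e > 0\<close>]] by blast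
  qed
  then obtain N w where N: "\<And>y. y \<in> F \<Longrightarrow> open (N y) \<and> connected (S \<inter> N y) \<and> y \<in> N y
      \<and> S \<inter> N y \<subseteq> ball y (e/2) \<and> w y \<in> S \<inter> N y \<and> f (w y) < \<xi>"
    by metis
  have "compact F"
    unfolding F_def by (rule compact_frontier_of_sublevel[OF cont cpt])
  then obtain T where T: "T \<subseteq> F" "finite T" "F \<subseteq> (\<Union>y\<in>T. N y)"
    using compactE_image[of F F N] N by blast
  have "compact (w ` T)"
    using T by (simp add: finite_imp_compact)
  moreover have "continuous_on (w ` T) f"
    using cont by (rule continuous_on_subset) (use T N in auto)
  moreover have "f p < \<xi>" if "p \<in> w ` T" for p
    using that T N by auto
  ultimately obtain m where "m < \<xi>" and m: "\<And>y. y \<in> T \<Longrightarrow> f (w y) \<le> m"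
    by (rule continuous_on_compact_less_imp_bound) blast+
  show ?thesis
  proof (intro exI[of _ "\<xi> - m"] conjI ballI)
    fix \<eta> y'
    assume \<eta>: "\<eta> \<in> {\<xi> - (\<xi> - m)<..<\<xi>}" and y': "y' \<in> (top_of_set S) frontier_of {p \<in> S. f p < \<xi>}"
    from y' have "y' \<in> F" unfolding F_def .
    then obtain y where "y \<in> T" "y' \<in> N y" using T by auto
    then have y: "y \<in> F" using T by auto
    have "connectedin (top_of_set S) (S \<inter> N y)"
      using N[OF y] by (simp add: connectedin_subtopology)
    moreover have "w y \<in> (S \<inter> N y) \<inter> {p \<in> S. f p < \<eta>}"
      using N[OF y] m[OF \<open>y \<in> T\<close>] \<eta> by auto
    moreover have "y' \<in> (S \<inter> N y) - {p \<in> S. f p < \<eta>}"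
      using \<open>y' \<in> F\<close> FS \<open>y' \<in> N y\<close> \<eta> by auto
    ultimately obtain q where q: "q \<in> S \<inter> N y" "q \<in> (top_of_set S) frontier_of {p \<in> S. f p < \<eta>}"
      using connectedin_Int_frontier_of[of "top_of_set S" "S \<inter> N y" "{p \<in> S. f p < \<eta>}"] by blast
    have "dist y' q \<le> dist y y' + dist y q"
      by (metis dist_commute dist_triangle)
    also have "\<dots> < e/2 + e/2"
      using N[OF y] q(1) \<open>y' \<in> F\<close> FS \<open>y' \<in> N y\<close> by (intro add_strict_mono) auto
    finally show "\<exists>q\<in>(top_of_set S) frontier_of {p \<in> S. f p < \<eta>}. dist y' q < e"
      using q(2) by auto
  qed (use \<open>m < \<xi>\<close> in auto)
qed

lemma eventually_frontier_of_sublevel_close: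
  fixes f :: "'a::metric_space \<Rightarrow> real"
  assumes cont: "continuous_on S f" and lc: "locally connected S"
    and cpt: "\<And>a b. compact {p \<in> S. a \<le> f p \<and> f p \<le> b}"
    and "(top_of_set S) frontier_of {p \<in> S. f p < \<xi>} \<noteq> {}" and "e > 0"
  shows "eventually (\<lambda>\<eta>.
           (\<forall>x\<in>{p \<in> S. f p = \<eta>}. infdist x ((top_of_set S) frontier_of {p \<in> S. f p < \<xi>}) < e) \<and>
           (\<forall>y\<in>(top_of_set S) frontier_of {p \<in> S. f p < \<xi>}.
              infdist y ((top_of_set S) frontier_of {p \<in> S. f p < \<eta>}) < e) \<and>
           (top_of_set S) frontier_of {p \<in> S. f p < \<eta>} \<noteq> {}) (at_left \<xi>)"
proof -
  define F where "F \<eta> = (top_of_set S) frontier_of {p \<in> S. f p < \<eta>}" for \<eta>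
  define A where "A \<eta> = {p \<in> S. f p = \<eta>}" for \<eta>
  have "{p \<in> S. f p = \<xi>} = {p \<in> S. \<xi> \<le> f p \<and> f p \<le> \<xi>}"
    by auto
  then have level_cpt: "compact {p \<in> S. f p = \<xi>}"
    using cpt by simp
  obtain d1 where "d1 > 0" and d1: "\<And>\<eta>. \<eta> \<in> {\<xi> - d1<..<\<xi>} \<Longrightarrow> \<forall>x\<in>A \<eta>. infdist x (F \<xi>) < e"
    using levels_near_frontier_of_sublevel[OF cont cpt \<open>e > 0\<close>, of \<xi>]
    unfolding A_def F_def by blast
  obtain d2 where "d2 > 0"
    and d2: "\<And>\<eta>. \<eta> \<in> {\<xi> - d2<..<\<xi>} \<Longrightarrow> \<forall>y\<in>F \<xi>. \<exists>q\<in>F \<eta>. dist y q < e"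
    using frontier_of_sublevel_near_lower_frontiers[OF cont lc level_cpt \<open>e > 0\<close>]
    unfolding F_def by blast
  have "eventually (\<lambda>\<eta>. \<eta> \<in> {\<xi> - min d1 d2<..<\<xi>}) (at_left \<xi>)"
    using \<open>d1 > 0\<close> \<open>d2 > 0\<close> by (intro eventually_at_left_real) auto
  then have "eventually (\<lambda>\<eta>. (\<forall>x\<in>A \<eta>. infdist x (F \<xi>) < e) \<and> (\<forall>y\<in>F \<xi>. infdist y (F \<eta>) < e)
               \<and> F \<eta> \<noteq> {}) (at_left \<xi>)"
  proof (rule eventually_mono)
    fix \<eta>
    assume "\<eta> \<in> {\<xi> - min d1 d2<..<\<xi>}"
    then have "\<eta> \<in> {\<xi> - d1<..<\<xi>}" "\<eta> \<in> {\<xi> - d2<..<\<xi>}"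
      by auto
    then have "\<forall>x\<in>A \<eta>. infdist x (F \<xi>) < e" and near: "\<forall>y\<in>F \<xi>. \<exists>q\<in>F \<eta>. dist y q < e"
      using d1 d2 by blast+
    moreover have "\<forall>y\<in>F \<xi>. infdist y (F \<eta>) < e"
    proof
      fix y
      assume "y \<in> F \<xi>"
      then obtain q where "q \<in> F \<eta>" "dist y q < e"
        using near by blast
      then show "infdist y (F \<eta>) < e"
        using infdist_le[of q "F \<eta>" y] by linarith
    qed
    moreover have "F \<eta> \<noteq> {}"
      using near assms(4) unfolding F_def by blast
    ultimately show "(\<forall>x\<in>A \<eta>. infdist x (F \<xi>) < e) \<and> (\<forall>y\<in>F \<xi>. infdist y (F \<eta>) < e)
               \<and> F \<eta> \<noteq> {}" by blast
  qed
  then show ?thesis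
    unfolding A_def F_def .
qed

lemma hausdist_frontier_of_sublevel_tendsto:
  fixes f :: "'a::metric_space \<Rightarrow> real"
  assumes cont: "continuous_on S f" and lc: "locally connected S"
    and cpt: "\<And>a b. compact {p \<in> S. a \<le> f p \<and> f p \<le> b}"
    and levels: "\<And>\<eta>. {p \<in> S. f p = \<eta>} \<noteq> {}"
    and "(top_of_set S) frontier_of {p \<in> S. f p < \<xi>} \<noteq> {}"
  shows "((\<lambda>\<eta>. hausdist ((top_of_set S) frontier_of {p \<in> S. f p < \<eta>})
                       ((top_of_set S) frontier_of {p \<in> S. f p < \<xi>})) \<longlongrightarrow> 0) (at_left \<xi>)"
    and "((\<lambda>\<eta>. hausdist {p \<in> S. f p = \<eta>}
                       ((top_of_set S) frontier_of {p \<in> S. f p < \<xi>})) \<longlongrightarrow> 0) (at_left \<xi>)"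
proof -
  define F where "F \<eta> = (top_of_set S) frontier_of {p \<in> S. f p < \<eta>}" for \<eta>
  define A where "A \<eta> = {p \<in> S. f p = \<eta>}" for \<eta>
  have "F \<xi> \<noteq> {}"
    using assms(5) unfolding F_def .
  have FA: "F \<eta> \<subseteq> A \<eta>" for \<eta>
    unfolding F_def A_def by (rule frontier_of_sublevel_subset_level[OF cont])
  note close = eventually_frontier_of_sublevel_close[OF cont lc cpt assms(5), folded A_def F_def]
  have "((\<lambda>\<eta>. hausdist (F \<eta>) (F \<xi>)) \<longlongrightarrow> 0) (at_left \<xi>)"
  proof (rule tendsto_hausdist_zeroI[OF \<open>F \<xi> \<noteq> {}\<close>])
    fix e :: real
    assume "e > 0"
    show "eventually (\<lambda>\<eta>. F \<eta> \<noteq> {} \<and> (\<forall>x\<in>F \<eta>. infdist x (F \<xi>) < e)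
                              \<and> (\<forall>y\<in>F \<xi>. infdist y (F \<eta>) < e)) (at_left \<xi>)"
      using close[OF \<open>e > 0\<close>] by (rule eventually_mono) (use FA in blast)
  qed
  moreover have "((\<lambda>\<eta>. hausdist (A \<eta>) (F \<xi>)) \<longlongrightarrow> 0) (at_left \<xi>)"
  proof (rule tendsto_hausdist_zeroI[OF \<open>F \<xi> \<noteq> {}\<close>])
    fix e :: real
    assume "e > 0"
    show "eventually (\<lambda>\<eta>. A \<eta> \<noteq> {} \<and> (\<forall>x\<in>A \<eta>. infdist x (F \<xi>) < e)
                              \<and> (\<forall>y\<in>F \<xi>. infdist y (A \<eta>) < e)) (at_left \<xi>)"
      using close[OF \<open>e > 0\<close>]
    proof (rule eventually_mono)
      fix \<eta>
      assume "(\<forall>x\<in>A \<eta>. infdist x (F \<xi>) < e) \<and> (\<forall>y\<in>F \<xi>. infdist y (F \<eta>) < e) \<and> F \<eta> \<noteq> {}"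
      moreover have "infdist y (A \<eta>) \<le> infdist y (F \<eta>)" if "F \<eta> \<noteq> {}" for y
        using FA that by (rule infdist_mono)
      ultimately show "A \<eta> \<noteq> {} \<and> (\<forall>x\<in>A \<eta>. infdist x (F \<xi>) < e)
                       \<and> (\<forall>y\<in>F \<xi>. infdist y (A \<eta>) < e)"
        using levels unfolding A_def by (meson le_less_trans)
    qed
  qed
  ultimately show "((\<lambda>\<eta>. hausdist ((top_of_set S) frontier_of {p \<in> S. f p < \<eta>})
                       ((top_of_set S) frontier_of {p \<in> S. f p < \<xi>})) \<longlongrightarrow> 0) (at_left \<xi>)"
    and "((\<lambda>\<eta>. hausdist {p \<in> S. f p = \<eta>}
                       ((top_of_set S) frontier_of {p \<in> S. f p < \<xi>})) \<longlongrightarrow> 0) (at_left \<xi>)"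
    unfolding F_def A_def by simp_all
qed

lemma hausdist_frontier_of_superlevel_tendsto:
  fixes f :: "'a::metric_space \<Rightarrow> real"
  assumes cont: "continuous_on S f" and lc: "locally connected S"
    and cpt: "\<And>a b. compact {p \<in> S. a \<le> f p \<and> f p \<le> b}"
    and levels: "\<And>\<eta>. {p \<in> S. f p = \<eta>} \<noteq> {}"
    and "(top_of_set S) frontier_of {p \<in> S. \<xi> < f p} \<noteq> {}"
  shows "((\<lambda>\<eta>. hausdist ((top_of_set S) frontier_of {p \<in> S. \<eta> < f p})
                       ((top_of_set S) frontier_of {p \<in> S. \<xi> < f p})) \<longlongrightarrow> 0) (at_right \<xi>)"
    and "((\<lambda>\<eta>. hausdist {p \<in> S. f p = \<eta>}
                       ((top_of_set S) frontier_of {p \<in> S. \<xi> < f p})) \<longlongrightarrow> 0) (at_right \<xi>)"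
proof -
  have sub: "{p \<in> S. - f p < \<eta>} = {p \<in> S. - \<eta> < f p}" for \<eta>
    by auto
  have lev: "{p \<in> S. - f p = \<eta>} = {p \<in> S. f p = - \<eta>}" for \<eta>
    by auto
  have band: "{p \<in> S. a \<le> - f p \<and> - f p \<le> b} = {p \<in> S. - b \<le> f p \<and> f p \<le> - a}" for a b
    by auto
  have "continuous_on S (\<lambda>p. - f p)"
    using cont by (rule continuous_on_minus)
  note reflected = hausdist_frontier_of_sublevel_tendsto[OF this lc, of "- \<xi>",
      unfolded sub lev band minus_minus, OF cpt levels assms(5)]
  show "((\<lambda>\<eta>. hausdist ((top_of_set S) frontier_of {p \<in> S. \<eta> < f p})
                       ((top_of_set S) frontier_of {p \<in> S. \<xi> < f p})) \<longlongrightarrow> 0) (at_right \<xi>)"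
    using reflected(1) unfolding at_right_minus filterlim_filtermap by simp
  show "((\<lambda>\<eta>. hausdist {p \<in> S. f p = \<eta>}
                       ((top_of_set S) frontier_of {p \<in> S. \<xi> < f p})) \<longlongrightarrow> 0) (at_right \<xi>)"
    using reflected(2) unfolding at_right_minus filterlim_filtermap by simp
qed

lemma component_in_sublevel_or_superlevel:
  fixes f :: "'a::topological_space \<Rightarrow> real"
  assumes cont: "continuous_on S f" and K: "K \<in> components (S - {p \<in> S. f p = \<eta>})"
  shows "K \<subseteq> {p \<in> S. f p < \<eta>} \<or> K \<subseteq> {p \<in> S. \<eta> < f p}"
proof (rule ccontr)
  assume "\<not> ?thesis"
  moreover have KS: "K \<subseteq> S - {p \<in> S. f p = \<eta>}"
    using K by (rule in_components_subset)
  ultimately obtain p q where "p \<in> K" "q \<in> K" "\<eta> \<le> f p" "f q \<le> \<eta>"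
    by (auto simp: not_less subset_iff)
  moreover have "connected (f ` K)"
    using cont KS in_components_connected[OF K]
    by (metis Diff_subset connected_continuous_image continuous_on_subset subset_trans)
  ultimately have "\<eta> \<in> f ` K"
    unfolding connected_iff_interval by blast
  then show False using KS by auto
qed

lemma closed_Ann: "closed Ann"
  unfolding Ann_def by (simp add: closed_Times)

lemma connected_Ann: "connected Ann"
  unfolding Ann_def by (simp add: connected_Times connected_sphere)

lemma locally_connected_Ann: "locally connected Ann"
  unfolding Ann_def
  by (rule locally_Times[OF locally_connected_sphere locally_connected_UNIV])
     (auto intro: connected_Times)

lemma height_shift_nat:
  assumes per: "\<And>z y. z \<in> sphere 0 1 \<Longrightarrow> h (z, y + 1) = h (z, y) + 1" and z: "z \<in> sphere 0 1"
  shows "h (z, y + real n) = h (z, y) + real n"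
proof (induction n)
  case (Suc n)
  have "h (z, y + real (Suc n)) = h (z, (y + real n) + 1)"
    by (simp add: algebra_simps)
  also have "\<dots> = h (z, y + real n) + 1"
    using per z by blast
  finally show ?case using Suc by simp
qed simp

lemma periodic_height_bounded_dist:
  fixes h :: "complex \<times> real \<Rightarrow> real"
  assumes cont: "continuous_on Ann h"
    and per: "\<And>z y. z \<in> sphere 0 1 \<Longrightarrow> h (z, y + 1) = h (z, y) + 1"
  obtains M where "\<forall>p\<in>Ann. \<bar>h p - snd p\<bar> \<le> M"
proof -
  have "compact (h ` (sphere 0 1 \<times> {0..1}))"
    by (rule compact_continuous_image[OF continuous_on_subset[OF cont]])
       (auto simp: Ann_def compact_Times)
  then obtain B where B: "\<And>t. t \<in> sphere 0 1 \<times> {0..1} \<Longrightarrow> \<bar>h t\<bar> \<le> B"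
    using compact_imp_bounded bounded_real by (metis image_eqI)
  have "\<bar>h (z, y) - y\<bar> \<le> B + 1" if z: "z \<in> sphere 0 1" for z y
  proof -
    define k where "k = \<lfloor>y\<rfloor>"
    define t where "t = y - of_int k"
    have "t \<in> {0..1}"
      unfolding t_def k_def by (simp add: less_imp_le) linarith
    have "h (z, y) = h (z, t) + of_int k"
    proof (cases "k \<ge> 0")
      case True
      then have "y = t + real (nat k)" unfolding t_def by simp
      then show ?thesis using height_shift_nat[OF per z, of t "nat k"] True by simp
    next
      case False
      then have "t = y + real (nat (-k))" unfolding t_def by simp
      then show ?thesis using height_shift_nat[OF per z, of y "nat (-k)"] False by simp
    qed
    moreover have "\<bar>h (z, t)\<bar> \<le> B"
      using B z \<open>t \<in> {0..1}\<close> by auto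
    moreover have "of_int k \<le> y" "y < of_int k + 1"
      unfolding k_def by linarith+
    ultimately show ?thesis by linarith
  qed
  then show ?thesis
    using that[of "B + 1"] by (force simp: Ann_def)
qed

lemma compact_level_band_Ann:
  fixes f :: "complex \<times> real \<Rightarrow> real"
  assumes cont: "continuous_on Ann f" and M: "\<forall>p\<in>Ann. \<bar>snd p\<bar> \<le> \<bar>f p\<bar> + M"
  shows "compact {p \<in> Ann. a \<le> f p \<and> f p \<le> b}"
proof -
  define R where "R = max \<bar>a\<bar> \<bar>b\<bar> + M"
  have "compact ((sphere 0 1 \<times> {-R..R}) \<inter> (Ann \<inter> f -` {a..b}))"
    by (intro compact_Int_closed continuous_closed_preimage[OF cont closed_Ann])
       (auto simp: compact_Times)
  moreover have "(sphere 0 1 \<times> {-R..R}) \<inter> (Ann \<inter> f -` {a..b}) = {p \<in> Ann. a \<le> f p \<and> f p \<le> b}"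
    using M unfolding R_def by (fastforce simp: Ann_def abs_le_iff)
  ultimately show ?thesis by simp
qed

lemma U_minus_U_plus_level_Ann:
  fixes h :: "complex \<times> real \<Rightarrow> real"
  assumes cont: "continuous_on Ann h" and M: "\<forall>p\<in>Ann. \<bar>h p - snd p\<bar> \<le> M"
    and ess: "essential_annular_continuum {p \<in> Ann. h p = \<eta>}"
  shows "U_minus {p \<in> Ann. h p = \<eta>} = {p \<in> Ann. h p < \<eta>}"
    and "U_plus {p \<in> Ann. h p = \<eta>} = {p \<in> Ann. \<eta> < h p}"
proof -
  define C where "C = {p \<in> Ann. h p = \<eta>}"
  obtain U V where UV: "components (Ann - C) = {U, V}"
    and U: "\<not> bdd_above (snd ` U)" and V: "\<not> bdd_below (snd ` V)"
    using ess unfolding essential_annular_continuum_def C_def by meson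
  have comp: "U \<in> components (Ann - C)" "V \<in> components (Ann - C)"
    using UV by simp_all
  then have "U \<subseteq> Ann" "V \<subseteq> Ann"
    using in_components_subset by blast+
  have "U \<subseteq> {p \<in> Ann. \<eta> < h p}"
  proof -
    obtain p where "p \<in> U" "\<eta> + M < snd p"
      using U unfolding bdd_above_def by (auto simp: not_le) (metis prod.collapse)
    moreover from this have "\<bar>h p - snd p\<bar> \<le> M"
      using M \<open>U \<subseteq> Ann\<close> by blast
    ultimately have "p \<in> U" "\<eta> < h p"
      by (simp_all add: abs_le_iff)
    with component_in_sublevel_or_superlevel[OF cont comp(1)[unfolded C_def]] show ?thesis
      by auto
  qed
  moreover have "V \<subseteq> {p \<in> Ann. h p < \<eta>}"
  proof -
    obtain p where "p \<in> V" "snd p < \<eta> - M"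
      using V unfolding bdd_below_def by (auto simp: not_le) (metis prod.collapse)
    moreover from this have "\<bar>h p - snd p\<bar> \<le> M"
      using M \<open>V \<subseteq> Ann\<close> by blast
    ultimately have "p \<in> V" "h p < \<eta>"
      by (simp_all add: abs_le_iff)
    with component_in_sublevel_or_superlevel[OF cont comp(2)[unfolded C_def]] show ?thesis
      by auto
  qed
  moreover have "U \<union> V = Ann - C"
    using Union_components[of "Ann - C"] UV by auto
  ultimately have Ueq: "U = {p \<in> Ann. \<eta> < h p}" and Veq: "V = {p \<in> Ann. h p < \<eta>}"
    unfolding C_def by auto
  have "bdd_below (snd ` U)"
    unfolding Ueq using M by (intro bdd_belowI2[where m = "\<eta> - M"]) (auto simp: abs_le_iff)
  moreover have "bdd_above (snd ` V)"
    unfolding Veq using M by (intro bdd_aboveI2[where M = "\<eta> + M"]) (auto simp: abs_le_iff)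
  ultimately have "{W \<in> components (Ann - C). \<not> bdd_below (snd ` W)} = {V}"
    and "{W \<in> components (Ann - C). \<not> bdd_above (snd ` W)} = {U}"
    using UV U V by auto
  then show "U_minus C = {p \<in> Ann. h p < \<eta>}" and "U_plus C = {p \<in> Ann. \<eta> < h p}"
    unfolding U_minus_def U_plus_def Ueq Veq by simp_all
qed

lemma frontier_of_sublevel_superlevel_nonempty_Ann:
  fixes h :: "complex \<times> real \<Rightarrow> real"
  assumes M: "\<forall>p\<in>Ann. \<bar>h p - snd p\<bar> \<le> M"
  shows "(top_of_set Ann) frontier_of {p \<in> Ann. h p < c} \<noteq> {}"
    and "(top_of_set Ann) frontier_of {p \<in> Ann. c < h p} \<noteq> {}"
proof -
  define lo hi where "lo = (1::complex, c - M - 1)" and "hi = (1::complex, c + M + 1)"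
  have "lo \<in> Ann" "hi \<in> Ann"
    by (simp_all add: lo_def hi_def Ann_def)
  moreover from this have "h lo < c" "c < h hi"
    using M by (auto simp: lo_def hi_def)
  moreover have "connectedin (top_of_set Ann) Ann"
    by (simp add: connectedin_subtopology connected_Ann)
  ultimately show "(top_of_set Ann) frontier_of {p \<in> Ann. h p < c} \<noteq> {}"
    and "(top_of_set Ann) frontier_of {p \<in> Ann. c < h p} \<noteq> {}"
    using connectedin_Int_frontier_of[of "top_of_set Ann" Ann "{p \<in> Ann. h p < c}"]
      connectedin_Int_frontier_of[of "top_of_set Ann" Ann "{p \<in> Ann. c < h p}"]
    by fastforce+
qed

theorem mainTheorem14:
  fixes h :: "complex \<times> real \<Rightarrow> real" and \<xi> :: real
  assumes cont: "continuous_on Ann h"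
    and per: "\<And>z y. z \<in> sphere 0 1 \<Longrightarrow> h (z, y + 1) = h (z, y) + 1"
    and ess: "\<And>\<eta>. essential_annular_continuum {p \<in> Ann. h p = \<eta>}"
    and thn: "thin {p \<in> Ann. h p = \<xi>}"
  shows "((\<lambda>\<eta>. hausdist (bd_Ann (U_minus {p \<in> Ann. h p = \<eta>}))
                         (bd_Ann (U_minus {p \<in> Ann. h p = \<xi>}))) \<longlongrightarrow> 0) (at_left \<xi>) \<and>
         ((\<lambda>\<eta>. hausdist {p \<in> Ann. h p = \<eta>}
                         (bd_Ann (U_minus {p \<in> Ann. h p = \<xi>}))) \<longlongrightarrow> 0) (at_left \<xi>) \<and>
         ((\<lambda>\<eta>. hausdist (bd_Ann (U_plus {p \<in> Ann. h p = \<eta>}))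
                         (bd_Ann (U_plus {p \<in> Ann. h p = \<xi>}))) \<longlongrightarrow> 0) (at_right \<xi>) \<and>
         ((\<lambda>\<eta>. hausdist {p \<in> Ann. h p = \<eta>}
                         (bd_Ann (U_plus {p \<in> Ann. h p = \<xi>}))) \<longlongrightarrow> 0) (at_right \<xi>)"
proof -
  obtain M where M: "\<forall>p\<in>Ann. \<bar>h p - snd p\<bar> \<le> M"
    using periodic_height_bounded_dist[OF cont per] by blast
  have "\<forall>p\<in>Ann. \<bar>snd p\<bar> \<le> \<bar>h p\<bar> + M"
    using M by (auto simp: abs_le_iff)
  then have cpt: "compact {p \<in> Ann. a \<le> h p \<and> h p \<le> b}" for a b
    by (rule compact_level_band_Ann[OF cont])
  have levels: "{p \<in> Ann. h p = \<eta>} \<noteq> {}" for \<eta>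
    using ess[of \<eta>] unfolding essential_annular_continuum_def by simp
  note U = U_minus_U_plus_level_Ann[OF cont M ess]
  note nonempty = frontier_of_sublevel_superlevel_nonempty_Ann[OF M]
  show ?thesis
    unfolding bd_Ann_def U
    using hausdist_frontier_of_sublevel_tendsto[OF cont locally_connected_Ann cpt levels nonempty(1)]
      hausdist_frontier_of_superlevel_tendsto[OF cont locally_connected_Ann cpt levels nonempty(2)]
    by simp
qed

end
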